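(* Let $(P,Q)$ be a solution of the Cucker–Smale model with velocity control described in the context, let $l\in[N]$ and $[l]=\{1,\dots,l\}$. Then, for $t>0$ (wherever the derivative of $t\mapsto\|P(t)\|_{[l]}$ exists), the following differential inequalities hold: (1) \[ \frac{d}{dt}\|P\|_{[l]}\le-\frac{\kappa\mathcal M l}{N}\psi(\|Q\|_{[l]})\|P\|_{[l]}+\frac{2\kappa M_{G'}(N-l)P^0_M L_{\psi,[l]}}{N}\|Q\|_{[l]}, \] where \[ L_{\psi,[l]}(t):=\sup_{\substack{r,s\ge q_{[l]}(t)\\ r\ne s}}\left|\frac{\psi(r)-\psi(s)}{r-s}\right|<\infty,\qquad q_{[l]}(t):=\min_{i'\in[l],\,j'\notin[l]}|q_{i'}(t)-q_{j'}(t)| \] (when $l=N$ the second term is absent since $N-l=0$); (2) \[ \frac{d}{dt}\|P\|_{[l]}\le-\frac{\kappa\mathcal M l}{N}\psi(\|Q\|_{[l]})\|P\|_{[l]}+\frac{4\kappa P^0_M M_{G'}l(N-l)}{N}\max_{i'\in[l],\,j'\notin[l]}\psi(|q_{i'}-q_{j'}|). \]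
   Context: Let $N\ge1$, $d\ge1$, $\kappa>0$, $[N]=\{1,\dots,N\}$. The velocity control function $G:\mathbb R^d\to\mathbb R^d$ is $G(p)=g(|p|)\,p/|p|$ for $p\ne0$, $G(0)=0$, with $g\in C^1([0,\infty))$, $g(0)=0$, $0<m\le g'\le M$ on every compact interval (constants depending on the interval), and $g$ convex or concave on $(0,\infty)$. The kernel $\psi:(0,\infty)\to(0,\infty)$ is bounded, Lipschitz continuous and nonincreasing. The model is, for $i\in[N]$, $t>0$: \[ \dot q_i=G(p_i),\qquad \dot p_i=\frac{\kappa}{N}\sum_{k=1}^N\psi(|q_k-q_i|)\big(G(p_k)-G(p_i)\big),\qquad (q_i,p_i)(0)=(q_i^0,p_i^0)\in\mathbb R^d\times\mathbb R^d. \] Notation: for $S\subset[N]$, $\|Q\|_S^2=\sum_{i,j\in S}|q_i-q_j|^2$, $\|P\|_S^2=\sum_{i,j\in S}|p_i-p_j|^2$; $P^0_M=\max_i|p_i^0|$, $M_{G'}=\max\{g'(r):0\le r\le P^0_M\}$, $m_{G'}=\min\{g'(r):0\le r\le P^0_M\}$, $\mathcal M=\min\{m_{G'},\,m_{G'}^2/M_{G'}\}$. *)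

theory Defs
  imports "HOL-Analysis.Analysis"
begin

definition velG :: "(real \<Rightarrow> real) \<Rightarrow> 'a::real_normed_vector \<Rightarrow> 'a" where
  "velG g p = (if p = 0 then 0 else (g (norm p) / norm p) *\<^sub>R p)"

definition grpnorm :: "nat set \<Rightarrow> (nat \<Rightarrow> 'a::real_normed_vector) \<Rightarrow> real" where
  "grpnorm S x = sqrt (\<Sum>i\<in>S. \<Sum>j\<in>S. (norm (x i - x j))^2)"

definition qmin :: "nat \<Rightarrow> nat \<Rightarrow> (nat \<Rightarrow> 'a::real_normed_vector) \<Rightarrow> real" where
  "qmin N l x = Min {norm (x i - x j) | i j. i \<in> {1..l} \<and> j \<in> {1..N} - {1..l}}"

definition psimax :: "(real \<Rightarrow> real) \<Rightarrow> nat \<Rightarrow> nat \<Rightarrow> (nat \<Rightarrow> 'a::real_normed_vector) \<Rightarrow> real" where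
  "psimax \<psi> N l x = Max {\<psi> (norm (x i - x j)) | i j. i \<in> {1..l} \<and> j \<in> {1..N} - {1..l}}"

definition dquot :: "(real \<Rightarrow> real) \<Rightarrow> real \<Rightarrow> real set" where
  "dquot \<psi> a = {\<bar>(\<psi> r - \<psi> s) / (r - s)\<bar> | r s. a \<le> r \<and> a \<le> s \<and> r \<noteq> s}"

definition Lpsi :: "(real \<Rightarrow> real) \<Rightarrow> real \<Rightarrow> real" where
  "Lpsi \<psi> a = Sup (dquot \<psi> a)"

end

theory Submission
  imports Defs
begin

text \<open>The derivative of \<open>\<parallel>P\<parallel>\<^sup>2\<close> over the group \<open>[l]\<close> is twice
  \<open>\<Sum>i,j\<in>[l]. \<langle>p i - p j, p' i - p' j\<rangle>\<close>, and the alignment force on an agent of the group splits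
  into the part coming from the group and the part coming from the other agents.  A maximum principle
  keeps all velocities in the ball of radius \<open>P\<^sup>0\<^sub>M\<close>, where \<open>m\<^sub>G' \<le> g' \<le> M\<^sub>G'\<close>;
  there \<open>G\<close> is \<open>m\<^sub>G'\<close>-strongly monotone and bounded by \<open>M\<^sub>G' P\<^sup>0\<^sub>M\<close>.  The internal part
  has zero total force by symmetry of the weights, and since all distances inside the group are at
  most \<open>\<parallel>Q\<parallel>\<close> and \<open>\<psi>\<close> is nonincreasing its contribution to that sum is at most
  \<open>-(\<kappa> l / N) m\<^sub>G' \<psi>(\<parallel>Q\<parallel>) \<parallel>P\<parallel>\<^sup>2\<close>.  The external part is bounded either through the
  Lipschitz constant of \<open>\<psi>\<close> beyond the separation \<open>q\<^sub>[\<^sub>l\<^sub>]\<close>, which makes the weights of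
  two group members differ by at most \<open>L |q i - q j|\<close>, or through the largest weight between the
  group and the rest.\<close>

section \<open>Velocity control\<close>

lemma mvt_halfline:
  fixes g g' :: "real \<Rightarrow> real"
  assumes g_deriv: "\<forall>r\<ge>0. (g has_real_derivative g' r) (at r within {0..})"
    and "0 \<le> a" "a \<le> b"
  obtains x where "x \<in> {a..b}" "g b - g a = g' x * (b - a)"
proof -
  have "\<exists>x\<in>{a..b}. g b - g a = (\<lambda>h. g' x * h) (b - a)"
  proof (rule mvt_very_simple[OF \<open>a \<le> b\<close>])
    fix x assume "a \<le> x" "x \<le> b"
    with g_deriv \<open>0 \<le> a\<close> have "(g has_real_derivative g' x) (at x within {0..})" by simp
    then have "(g has_real_derivative g' x) (at x within {a..b})"
      by (rule has_field_derivative_subset) (use \<open>0 \<le> a\<close> in auto)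
    then show "(g has_derivative (\<lambda>h. g' x * h)) (at x within {a..b})"
      by (simp add: has_field_derivative_def)
  qed
  with that show ?thesis by auto
qed

lemma mono_on_halfline_if_deriv_nonneg:
  fixes g g' :: "real \<Rightarrow> real"
  assumes "\<forall>r\<ge>0. (g has_real_derivative g' r) (at r within {0..})" and "\<forall>r\<ge>0. 0 \<le> g' r"
  shows "mono_on {0..} g"
proof (rule mono_onI)
  fix a b :: real assume "a \<in> {0..}" "b \<in> {0..}" "a \<le> b"
  then obtain x where "x \<in> {a..b}" "g b - g a = g' x * (b - a)"
    using mvt_halfline[OF assms(1)] by auto
  with assms(2) \<open>a \<in> {0..}\<close> show "g a \<le> g b"
    by (metis atLeastAtMost_iff atLeast_iff diff_ge_0_iff_ge order_trans zero_le_mult_iff)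
qed

lemma increment_lower_bound:
  fixes g g' :: "real \<Rightarrow> real"
  assumes "\<forall>r\<ge>0. (g has_real_derivative g' r) (at r within {0..})"
    and "\<forall>r\<in>{a..b}. m \<le> g' r" and "0 \<le> a" "a \<le> b"
  shows "m * (b - a) \<le> g b - g a"
proof -
  obtain x where "x \<in> {a..b}" "g b - g a = g' x * (b - a)"
    using mvt_halfline[OF assms(1,3,4)] .
  with assms(2,4) show ?thesis by (simp add: mult_right_mono)
qed

lemma increment_upper_bound:
  fixes g g' :: "real \<Rightarrow> real"
  assumes "\<forall>r\<ge>0. (g has_real_derivative g' r) (at r within {0..})"
    and "\<forall>r\<in>{a..b}. g' r \<le> M" and "0 \<le> a" "a \<le> b"
  shows "g b - g a \<le> M * (b - a)"
proof -
  obtain x where "x \<in> {a..b}" "g b - g a = g' x * (b - a)"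
    using mvt_halfline[OF assms(1,3,4)] .
  with assms(2,4) show ?thesis by (simp add: mult_right_mono)
qed

lemma velG_eq_scaleR: "velG g x = (g (norm x) / norm x) *\<^sub>R x"
  by (simp add: velG_def)

lemma norm_velG_le:
  fixes u :: "'a::real_normed_vector"
  assumes g_deriv: "\<forall>r\<ge>0. (g has_real_derivative g' r) (at r within {0..})"
    and g0: "g 0 = 0" and "0 \<le> m" and bounds: "\<forall>r\<in>{0..R}. m \<le> g' r \<and> g' r \<le> M"
    and u: "norm u \<le> R"
  shows "norm (velG g u) \<le> M * R"
proof -
  have "\<forall>r\<in>{0..norm u}. 0 \<le> g' r"
  proof
    fix r assume "r \<in> {0..norm u}"
    with bounds u have "m \<le> g' r" by auto
    with \<open>0 \<le> m\<close> show "0 \<le> g' r" by simp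
  qed
  with increment_lower_bound[OF g_deriv this] g0 have "0 \<le> g (norm u)" by simp
  have "g (norm u) \<le> M * norm u"
    using increment_upper_bound[OF g_deriv, of 0 "norm u" M] bounds u g0 by simp
  have "0 \<in> {0..R}" using order_trans[OF norm_ge_zero u] by simp
  with bounds have "m \<le> g' 0" "g' 0 \<le> M" by auto
  with \<open>0 \<le> m\<close> have "0 \<le> M" by linarith
  have "norm (velG g u) = g (norm u)" using \<open>0 \<le> g (norm u)\<close> g0 by (simp add: velG_def)
  also have "\<dots> \<le> M * norm u" by fact
  also have "\<dots> \<le> M * R" using u \<open>0 \<le> M\<close> by (rule mult_left_mono)
  finally show ?thesis .
qed

text \<open>With \<open>a = |x|\<close>, \<open>b = |y|\<close>, \<open>\<alpha> = g a / a\<close>, \<open>\<beta> = g b / b\<close> (the junk value at the origin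
  is harmless as \<open>g 0 = 0\<close>) the claim is
  \<open>(g a - g b)(a - b) - m (a - b)\<^sup>2 + (\<alpha> + \<beta> - 2m)(a b - \<langle>x, y\<rangle>) \<ge> 0\<close>:
  the first part is controlled by \<open>g' \<ge> m\<close>, the second by Cauchy--Schwarz.\<close>
lemma velG_strongly_monotone:
  fixes x y :: "'a::real_inner"
  assumes g_deriv: "\<forall>r\<ge>0. (g has_real_derivative g' r) (at r within {0..})"
    and g0: "g 0 = 0" and lower: "\<forall>r\<in>{0..R}. m \<le> g' r"
    and x: "norm x \<le> R" and y: "norm y \<le> R"
  shows "m * (norm (x - y))\<^sup>2 \<le> inner (x - y) (velG g x - velG g y)"
proof -
  define a b c where "a = norm x" and "b = norm y" and "c = inner x y"
  define \<alpha> \<beta> where "\<alpha> = g a / a" and "\<beta> = g b / b"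
  have incr: "m * (s - r) \<le> g s - g r" if "0 \<le> r" "r \<le> s" "s \<le> R" for r s
    using increment_lower_bound[OF g_deriv, of r s m] lower that by auto
  have ga: "g a = \<alpha> * a" and gb: "g b = \<beta> * b"
    using g0 by (auto simp: \<alpha>_def \<beta>_def)
  have key: "m * (a - b)\<^sup>2 \<le> (g a - g b) * (a - b)"
  proof (cases "a \<le> b")
    case True
    with incr[of a b] y have "m * (b - a) * (b - a) \<le> (g b - g a) * (b - a)"
      by (intro mult_right_mono) (auto simp: a_def b_def)
    then show ?thesis by (simp add: power2_eq_square algebra_simps)
  next
    case False
    with incr[of b a] x have "m * (a - b) * (a - b) \<le> (g a - g b) * (a - b)"
      by (intro mult_right_mono) (auto simp: a_def b_def)
    then show ?thesis by (simp add: power2_eq_square)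
  qed
  have cs: "0 \<le> (\<alpha> + \<beta> - 2 * m) * (a * b - c)"
  proof (cases "x = 0 \<or> y = 0")
    case False
    then have "0 < a" "0 < b" by (auto simp: a_def b_def)
    with incr[of 0 a] incr[of 0 b] x y g0 have "m \<le> \<alpha>" "m \<le> \<beta>"
      by (auto simp: a_def b_def \<alpha>_def \<beta>_def field_simps)
    moreover have "c \<le> a * b" unfolding a_def b_def c_def by (rule norm_cauchy_schwarz)
    ultimately show ?thesis by simp
  qed (auto simp: a_def b_def c_def)
  have lhs: "inner (x - y) (velG g x - velG g y) = \<alpha> * a\<^sup>2 - (\<alpha> + \<beta>) * c + \<beta> * b\<^sup>2"
    by (simp add: velG_eq_scaleR inner_diff inner_commute \<alpha>_def \<beta>_def a_def b_def c_def
        power2_norm_eq_inner algebra_simps)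
  have rhs: "(norm (x - y))\<^sup>2 = a\<^sup>2 + b\<^sup>2 - 2 * c"
    by (simp add: power2_norm_eq_inner inner_diff inner_commute a_def b_def c_def algebra_simps)
  have "\<alpha> * a\<^sup>2 - (\<alpha> + \<beta>) * c + \<beta> * b\<^sup>2 - m * (a\<^sup>2 + b\<^sup>2 - 2 * c)
      = ((\<alpha> * a - \<beta> * b) * (a - b) - m * (a - b)\<^sup>2) + (\<alpha> + \<beta> - 2 * m) * (a * b - c)"
    by (simp add: power2_eq_square algebra_simps)
  with key cs show ?thesis
    unfolding lhs rhs ga gb by linarith
qed

lemma inner_velG_diff_nonpos:
  fixes x y :: "'a::real_inner"
  assumes "g 0 = 0" and g_mono: "mono_on {0..} g" and "norm y \<le> norm x"
  shows "inner x (velG g y - velG g x) \<le> 0"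
proof -
  have "0 \<le> g (norm y)" "g (norm y) \<le> g (norm x)"
    using mono_onD[OF g_mono, of 0 "norm y"] mono_onD[OF g_mono, of "norm y" "norm x"] assms(1,3)
    by auto
  have "inner x (velG g y) \<le> norm x * norm (velG g y)" by (rule norm_cauchy_schwarz)
  also have "norm (velG g y) = g (norm y)" using \<open>0 \<le> g (norm y)\<close> assms(1) by (simp add: velG_def)
  also have "norm x * g (norm y) \<le> norm x * g (norm x)"
    using \<open>g (norm y) \<le> g (norm x)\<close> by (intro mult_left_mono) auto
  also have "\<dots> = inner x (velG g x)"
    by (auto simp: velG_def power2_norm_eq_inner[symmetric] power2_eq_square)
  finally show ?thesis by (simp add: inner_diff_right)
qed

lemma Inf_Sup_image_bounds:
  fixes f :: "real \<Rightarrow> real"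
  assumes "S \<noteq> {}" and bounds: "\<forall>x\<in>S. m \<le> f x \<and> f x \<le> M"
  shows "m \<le> Inf (f ` S)" and "\<forall>x\<in>S. Inf (f ` S) \<le> f x \<and> f x \<le> Sup (f ` S)"
proof -
  have "bdd_below (f ` S)" "bdd_above (f ` S)"
    using bounds by (auto intro!: bdd_belowI[of _ m] bdd_aboveI[of _ M])
  with assms show "m \<le> Inf (f ` S)" "\<forall>x\<in>S. Inf (f ` S) \<le> f x \<and> f x \<le> Sup (f ` S)"
    by (auto intro: cInf_greatest cInf_lower cSup_upper)
qed

lemma velocity_control_bounds:
  fixes g g' :: "real \<Rightarrow> real"
  assumes g_deriv: "\<forall>r\<ge>0. (g has_real_derivative g' r) (at r within {0..})"
    and g'_bounds: "\<forall>b\<ge>0. \<exists>m M. 0 < m \<and> (\<forall>r\<in>{0..b}. m \<le> g' r \<and> g' r \<le> M)"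
    and "0 \<le> R"
  defines "mG \<equiv> Inf (g' ` {0..R})" and "MG \<equiv> Sup (g' ` {0..R})"
  shows "mono_on {0..} g" and "0 < mG" and "mG \<le> MG" and "\<forall>r\<in>{0..R}. mG \<le> g' r \<and> g' r \<le> MG"
proof -
  have "\<forall>r\<ge>0. 0 \<le> g' r"
  proof (intro allI impI)
    fix r :: real assume "0 \<le> r"
    with g'_bounds obtain m where "0 < m" "\<forall>s\<in>{0..r}. m \<le> g' s" by blast
    from \<open>\<forall>s\<in>{0..r}. m \<le> g' s\<close> \<open>0 \<le> r\<close> have "m \<le> g' r" by simp
    with \<open>0 < m\<close> show "0 \<le> g' r" by simp
  qed
  then show "mono_on {0..} g" by (rule mono_on_halfline_if_deriv_nonneg[OF g_deriv])
  obtain m0 M0 where "0 < m0" "\<forall>r\<in>{0..R}. m0 \<le> g' r \<and> g' r \<le> M0"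
    using g'_bounds \<open>0 \<le> R\<close> by blast
  with Inf_Sup_image_bounds[of "{0..R}" m0 g' M0] \<open>0 \<le> R\<close>
  show "0 < mG" and range: "\<forall>r\<in>{0..R}. mG \<le> g' r \<and> g' r \<le> MG"
    by (auto simp: mG_def MG_def)
  from range \<open>0 \<le> R\<close> have "mG \<le> g' 0" "g' 0 \<le> MG" by auto
  then show "mG \<le> MG" by linarith
qed

section \<open>The group seminorm and its derivative\<close>

lemma grpnorm_nonneg: "0 \<le> grpnorm I x"
  by (simp add: grpnorm_def sum_nonneg)

lemma grpnorm_sq: "(grpnorm I x)\<^sup>2 = (\<Sum>i\<in>I. \<Sum>j\<in>I. (norm (x i - x j))\<^sup>2)"
  by (simp add: grpnorm_def sum_nonneg)

lemma norm_le_grpnorm: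
  assumes "finite I" "i \<in> I" "j \<in> I"
  shows "norm (x i - x j) \<le> grpnorm I x"
proof -
  have "(norm (x i - x j))\<^sup>2 \<le> (\<Sum>j\<in>I. (norm (x i - x j))\<^sup>2)"
    using assms by (intro member_le_sum) auto
  also have "\<dots> \<le> (\<Sum>i\<in>I. \<Sum>j\<in>I. (norm (x i - x j))\<^sup>2)"
    using assms by (intro member_le_sum[of i] sum_nonneg) auto
  finally show ?thesis unfolding grpnorm_def by (rule real_le_rsqrt)
qed

lemma grpnorm_eq_L2_set:
  assumes "finite I"
  shows "grpnorm I x = L2_set (\<lambda>(i, j). norm (x i - x j)) (I \<times> I)"
  unfolding grpnorm_def L2_set_def by (simp add: sum.cartesian_product case_prod_unfold)

lemma sum_norm_mult_le_grpnorm: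
  assumes "finite I"
  shows "(\<Sum>i\<in>I. \<Sum>j\<in>I. norm (x i - x j) * norm (y i - y j)) \<le> grpnorm I x * grpnorm I y"
  using L2_set_mult_ineq[of "\<lambda>(i, j). norm (x i - x j)" "\<lambda>(i, j). norm (y i - y j)" "I \<times> I"]
  by (simp add: grpnorm_eq_L2_set[OF assms] sum.cartesian_product case_prod_unfold)

lemma sum_norm_le_grpnorm:
  assumes "finite I"
  shows "(\<Sum>i\<in>I. \<Sum>j\<in>I. norm (x i - x j)) \<le> real (card I) * grpnorm I x"
proof -
  have "L2_set (\<lambda>_. 1::real) (I \<times> I) = real (card I)"
    by (simp add: L2_set_def card_cartesian_product)
  then show ?thesis
    using L2_set_mult_ineq[of "\<lambda>(i, j). norm (x i - x j)" "\<lambda>_. 1::real" "I \<times> I"]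
    by (simp add: grpnorm_eq_L2_set[OF assms] sum.cartesian_product case_prod_unfold mult.commute)
qed

definition grpinner :: "nat set \<Rightarrow> (nat \<Rightarrow> 'a::real_inner) \<Rightarrow> (nat \<Rightarrow> 'a) \<Rightarrow> real" where
  "grpinner I x v = (\<Sum>i\<in>I. \<Sum>j\<in>I. inner (x i - x j) (v i - v j))"

lemma grpinner_add_right: "grpinner I x (\<lambda>i. v i + w i) = grpinner I x v + grpinner I x w"
  by (simp add: grpinner_def add_diff_add inner_add_right sum.distrib)

lemma grpinner_scaleR_right: "grpinner I x (\<lambda>i. c *\<^sub>R v i) = c * grpinner I x v"
  by (simp add: grpinner_def sum_distrib_left scaleR_diff_right[symmetric])

lemma grpinner_eq_double_sum:
  "grpinner I x v = 2 * (\<Sum>i\<in>I. \<Sum>j\<in>I. inner (x i - x j) (v i))"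
proof -
  have "(\<Sum>i\<in>I. \<Sum>j\<in>I. inner (x i - x j) (v j)) = (\<Sum>j\<in>I. \<Sum>i\<in>I. inner (x i - x j) (v j))"
    by (rule sum.swap)
  also have "\<dots> = - (\<Sum>i\<in>I. \<Sum>j\<in>I. inner (x i - x j) (v i))"
    by (simp add: sum_negf[symmetric] inner_diff_left)
  finally show ?thesis
    by (simp add: grpinner_def inner_diff_right sum_subtractf)
qed

lemma has_real_derivative_norm_sq:
  fixes f :: "real \<Rightarrow> 'a::real_inner"
  assumes "(f has_vector_derivative f') (at t)"
  shows "((\<lambda>s. (norm (f s))\<^sup>2) has_real_derivative 2 * inner (f t) f') (at t)"
proof -
  have "(f has_derivative (\<lambda>h. h *\<^sub>R f')) (at t)"
    using assms by (simp add: has_vector_derivative_def)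
  from has_derivative_inner[OF this this]
  have "((\<lambda>s. inner (f s) (f s)) has_derivative (\<lambda>h. inner (f t) (h *\<^sub>R f') + inner (h *\<^sub>R f') (f t))) (at t)" .
  moreover have "(\<lambda>h. inner (f t) (h *\<^sub>R f') + inner (h *\<^sub>R f') (f t)) = (*) (2 * inner (f t) f')"
    by (auto simp: inner_commute algebra_simps)
  ultimately show ?thesis
    by (simp add: has_field_derivative_def power2_norm_eq_inner)
qed

lemma has_real_derivative_grpnorm_sq:
  fixes p :: "nat \<Rightarrow> real \<Rightarrow> 'a::real_inner"
  assumes "\<forall>i\<in>I. (p i has_vector_derivative v i) (at t)"
  shows "((\<lambda>s. (grpnorm I (\<lambda>i. p i s))\<^sup>2) has_real_derivative 2 * grpinner I (\<lambda>i. p i t) v) (at t)"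
  unfolding grpnorm_sq grpinner_def sum_distrib_left
  by (intro DERIV_sum has_real_derivative_norm_sq has_vector_derivative_diff) (use assms in auto)

lemma DERIV_le_if_mult_le:
  fixes f :: "real \<Rightarrow> real"
  assumes D: "(f has_real_derivative D) (at t)" and "\<forall>s. 0 \<le> f s"
    and "D * f t \<le> f t * X" and "f t = 0 \<Longrightarrow> 0 \<le> X"
  shows "D \<le> X"
proof (cases "f t = 0")
  case True
  then have "D = 0"
    using assms(2) by (intro DERIV_local_min[OF D, of 1]) auto
  with True assms(4) show ?thesis by simp
next
  case False
  with assms(2,3) show ?thesis by (simp add: less_le mult.commute)
qed

text \<open>The derivative of \<open>grpnorm\<close> is read off from that of its square; at a zero of
  \<open>grpnorm\<close> it vanishes (a minimum), which is why \<open>0 \<le> b\<close> is needed.\<close>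
lemma grpnorm_deriv_le:
  fixes p :: "nat \<Rightarrow> real \<Rightarrow> 'a::real_inner"
  assumes "\<forall>i\<in>I. (p i has_vector_derivative v i) (at t)"
    and D: "((\<lambda>s. grpnorm I (\<lambda>i. p i s)) has_real_derivative D) (at t)"
    and bound: "grpinner I (\<lambda>i. p i t) v \<le> grpnorm I (\<lambda>i. p i t) * (a * grpnorm I (\<lambda>i. p i t) + b)"
    and "0 \<le> b"
  shows "D \<le> a * grpnorm I (\<lambda>i. p i t) + b"
proof (rule DERIV_le_if_mult_le[OF D])
  have "((\<lambda>s. (grpnorm I (\<lambda>i. p i s))\<^sup>2) has_real_derivative 2 * grpnorm I (\<lambda>i. p i t) * D) (at t)"
    using DERIV_power[OF D, of 2] by (simp add: mult_ac)
  from DERIV_unique[OF this has_real_derivative_grpnorm_sq[OF assms(1)]]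
  have "D * grpnorm I (\<lambda>i. p i t) = grpinner I (\<lambda>i. p i t) v" by (simp add: mult_ac)
  with bound show "D * grpnorm I (\<lambda>i. p i t) \<le> grpnorm I (\<lambda>i. p i t) * (a * grpnorm I (\<lambda>i. p i t) + b)"
    by simp
qed (use grpnorm_nonneg \<open>0 \<le> b\<close> in auto)

section \<open>The alignment force\<close>

text \<open>The velocity equation reads \<open>p' i = (\<kappa> / N) *\<^sub>R alignment \<psi> (velG g) {1..N} q p i\<close>.\<close>
definition alignment ::
  "(real \<Rightarrow> real) \<Rightarrow> ('a \<Rightarrow> 'a) \<Rightarrow> nat set \<Rightarrow> (nat \<Rightarrow> 'a) \<Rightarrow> (nat \<Rightarrow> 'a) \<Rightarrow> nat \<Rightarrow> 'a::real_normed_vector"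
  where "alignment \<psi> G K q p i = (\<Sum>k\<in>K. \<psi> (norm (q k - q i)) *\<^sub>R (G (p k) - G (p i)))"

lemma alignment_Un:
  assumes "finite A" "finite B" "A \<inter> B = {}"
  shows "alignment \<psi> G (A \<union> B) q p i = alignment \<psi> G A q p i + alignment \<psi> G B q p i"
  using assms by (simp add: alignment_def sum.union_disjoint)

lemma sum_alignment_self: "(\<Sum>i\<in>I. alignment \<psi> G I q p i) = 0"
proof -
  have "(\<Sum>i\<in>I. \<Sum>k\<in>I. \<psi> (norm (q k - q i)) *\<^sub>R G (p k))
      = (\<Sum>k\<in>I. \<Sum>i\<in>I. \<psi> (norm (q k - q i)) *\<^sub>R G (p k))"
    by (rule sum.swap)
  also have "\<dots> = (\<Sum>i\<in>I. \<Sum>k\<in>I. \<psi> (norm (q k - q i)) *\<^sub>R G (p i))"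
    by (simp add: norm_minus_commute)
  finally show ?thesis
    by (simp add: alignment_def scaleR_diff_right sum_subtractf)
qed

lemma sum_inner_alignment_self:
  "2 * (\<Sum>i\<in>I. inner (p i) (alignment \<psi> G I q p i))
    = - (\<Sum>i\<in>I. \<Sum>k\<in>I. \<psi> (norm (q k - q i)) * inner (p i - p k) (G (p i) - G (p k)))"
proof -
  define A where "A = (\<Sum>i\<in>I. \<Sum>k\<in>I. \<psi> (norm (q k - q i)) * inner (p i) (G (p k) - G (p i)))"
  have "A = (\<Sum>k\<in>I. \<Sum>i\<in>I. \<psi> (norm (q k - q i)) * inner (p i) (G (p k) - G (p i)))"
    unfolding A_def by (rule sum.swap)
  also have "\<dots> = (\<Sum>i\<in>I. \<Sum>k\<in>I. \<psi> (norm (q k - q i)) * inner (p k) (G (p i) - G (p k)))"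
    by (simp add: norm_minus_commute)
  finally have "2 * A = A + (\<Sum>i\<in>I. \<Sum>k\<in>I. \<psi> (norm (q k - q i)) * inner (p k) (G (p i) - G (p k)))"
    by simp
  also have "\<dots> = - (\<Sum>i\<in>I. \<Sum>k\<in>I. \<psi> (norm (q k - q i)) * inner (p i - p k) (G (p i) - G (p k)))"
    by (simp add: A_def sum.distrib[symmetric] sum_negf[symmetric] inner_diff_left inner_diff_right
        algebra_simps)
  finally show ?thesis
    by (simp add: A_def alignment_def inner_sum_right)
qed

lemma grpinner_alignment_self_le:
  fixes p q :: "nat \<Rightarrow> 'a::real_inner"
  assumes "finite I" "0 \<le> m" "0 \<le> w"
    and weights: "\<forall>i\<in>I. \<forall>k\<in>I. w \<le> \<psi> (norm (q k - q i))"
    and G_mono: "\<forall>i\<in>I. \<forall>k\<in>I. m * (norm (p i - p k))\<^sup>2 \<le> inner (p i - p k) (G (p i) - G (p k))"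
  shows "grpinner I p (alignment \<psi> G I q p) \<le> - (real (card I) * w * m) * (grpnorm I p)\<^sup>2"
proof -
  let ?F = "alignment \<psi> G I q p"
  have "(\<Sum>i\<in>I. \<Sum>j\<in>I. inner (p i - p j) (?F i))
      = real (card I) * (\<Sum>i\<in>I. inner (p i) (?F i)) - inner (\<Sum>j\<in>I. p j) (\<Sum>i\<in>I. ?F i)"
    by (simp add: inner_diff_left sum_subtractf inner_sum_left inner_sum_right sum_distrib_left)
  then have "grpinner I p ?F = real (card I) * (2 * (\<Sum>i\<in>I. inner (p i) (?F i)))"
    by (simp add: grpinner_eq_double_sum sum_alignment_self)
  also have "\<dots> \<le> real (card I) * - (\<Sum>i\<in>I. \<Sum>k\<in>I. w * (m * (norm (p i - p k))\<^sup>2))"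
    unfolding sum_inner_alignment_self
  proof (intro mult_left_mono le_imp_neg_le sum_mono)
    fix i k assume "i \<in> I" "k \<in> I"
    with weights G_mono assms(2,3) show
      "w * (m * (norm (p i - p k))\<^sup>2) \<le> \<psi> (norm (q k - q i)) * inner (p i - p k) (G (p i) - G (p k))"
      by (intro mult_mono) force+
  qed simp
  also have "\<dots> = - (real (card I) * w * m) * (grpnorm I p)\<^sup>2"
    by (simp add: grpnorm_sq sum_distrib_left sum_negf mult_ac)
  finally show ?thesis .
qed

lemma mult_inner_le: "c * inner x y \<le> \<bar>c\<bar> * norm x * norm y"
  by (metis Cauchy_Schwarz_ineq2 abs_ge_self abs_ge_zero abs_mult mult.assoc mult_left_mono order_trans)

lemma inner_alignment_diff_le:
  fixes p q :: "nat \<Rightarrow> 'a::real_inner"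
  assumes "\<forall>k\<in>E. 0 \<le> \<psi> (norm (q k - q j))"
    and "0 \<le> inner (p i - p j) (G (p i) - G (p j))"
    and K: "\<forall>k\<in>E. \<bar>\<psi> (norm (q k - q i)) - \<psi> (norm (q k - q j))\<bar> * norm (G (p k) - G (p i)) \<le> K"
  shows "inner (p i - p j) (alignment \<psi> G E q p i - alignment \<psi> G E q p j)
    \<le> real (card E) * K * norm (p i - p j)"
proof -
  have split: "a *\<^sub>R (G (p k) - G (p i)) - b *\<^sub>R (G (p k) - G (p j))
      = (a - b) *\<^sub>R (G (p k) - G (p i)) - b *\<^sub>R (G (p i) - G (p j))" for a b k
    by (simp add: algebra_simps)
  have "inner (p i - p j) (alignment \<psi> G E q p i - alignment \<psi> G E q p j)
      = (\<Sum>k\<in>E. (\<psi> (norm (q k - q i)) - \<psi> (norm (q k - q j))) * inner (p i - p j) (G (p k) - G (p i))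
               - \<psi> (norm (q k - q j)) * inner (p i - p j) (G (p i) - G (p j)))"
    by (simp add: alignment_def sum_subtractf[symmetric] split inner_sum_right inner_diff_right)
  also have "\<dots> \<le> (\<Sum>k\<in>E. K * norm (p i - p j))"
  proof (rule sum_mono)
    fix k assume "k \<in> E"
    have "(\<psi> (norm (q k - q i)) - \<psi> (norm (q k - q j))) * inner (p i - p j) (G (p k) - G (p i))
        \<le> (\<bar>\<psi> (norm (q k - q i)) - \<psi> (norm (q k - q j))\<bar> * norm (G (p k) - G (p i))) * norm (p i - p j)"
      using mult_inner_le[of "\<psi> (norm (q k - q i)) - \<psi> (norm (q k - q j))" "p i - p j" "G (p k) - G (p i)"] by (simp add: mult_ac)
    also have "\<dots> \<le> K * norm (p i - p j)"
      using K \<open>k \<in> E\<close> by (intro mult_right_mono) auto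
    finally show "(\<psi> (norm (q k - q i)) - \<psi> (norm (q k - q j))) * inner (p i - p j) (G (p k) - G (p i))
        - \<psi> (norm (q k - q j)) * inner (p i - p j) (G (p i) - G (p j)) \<le> K * norm (p i - p j)"
      using assms(1,2) \<open>k \<in> E\<close> by (smt (verit) mult_nonneg_nonneg)
  qed
  finally show ?thesis by simp
qed

lemma inner_alignment_le:
  fixes p q :: "nat \<Rightarrow> 'a::real_inner"
  assumes K: "\<forall>k\<in>E. \<bar>\<psi> (norm (q k - q i))\<bar> * norm (G (p k) - G (p i)) \<le> K"
  shows "inner (p i - p j) (alignment \<psi> G E q p i) \<le> real (card E) * K * norm (p i - p j)"
proof -
  have "inner (p i - p j) (alignment \<psi> G E q p i)
      = (\<Sum>k\<in>E. \<psi> (norm (q k - q i)) * inner (p i - p j) (G (p k) - G (p i)))"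
    by (simp add: alignment_def inner_sum_right)
  also have "\<dots> \<le> (\<Sum>k\<in>E. K * norm (p i - p j))"
  proof (rule sum_mono)
    fix k assume "k \<in> E"
    have "\<psi> (norm (q k - q i)) * inner (p i - p j) (G (p k) - G (p i))
        \<le> (\<bar>\<psi> (norm (q k - q i))\<bar> * norm (G (p k) - G (p i))) * norm (p i - p j)"
      using mult_inner_le[of "\<psi> (norm (q k - q i))" "p i - p j" "G (p k) - G (p i)"] by (simp add: mult_ac)
    also have "\<dots> \<le> K * norm (p i - p j)"
      using K \<open>k \<in> E\<close> by (intro mult_right_mono) auto
    finally show "\<psi> (norm (q k - q i)) * inner (p i - p j) (G (p k) - G (p i)) \<le> K * norm (p i - p j)" .
  qed
  finally show ?thesis by simp
qed

lemma grpinner_alignment_lipschitz_le: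
  fixes p q :: "nat \<Rightarrow> 'a::real_inner"
  assumes "finite I"
    and lip: "\<forall>r s. a \<le> r \<longrightarrow> a \<le> s \<longrightarrow> \<bar>\<psi> r - \<psi> s\<bar> \<le> L * \<bar>r - s\<bar>"
    and sep: "\<forall>i\<in>I. \<forall>k\<in>E. a \<le> norm (q k - q i)"
    and nonneg: "\<forall>i\<in>I. \<forall>k\<in>E. 0 \<le> \<psi> (norm (q k - q i))"
    and G_mono: "\<forall>i\<in>I. \<forall>j\<in>I. 0 \<le> inner (p i - p j) (G (p i) - G (p j))"
    and G_bdd: "\<forall>i\<in>I. \<forall>k\<in>E. norm (G (p k) - G (p i)) \<le> \<Gamma>"
  shows "grpinner I p (alignment \<psi> G E q p) \<le> real (card E) * L * \<Gamma> * grpnorm I p * grpnorm I q"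
proof (cases "I = {} \<or> E = {}")
  case True
  then show ?thesis by (auto simp: grpinner_def alignment_def grpnorm_def)
next
  case False
  then obtain i0 k0 where "i0 \<in> I" "k0 \<in> E" by blast
  have "0 \<le> L" using lip[rule_format, of a "a + 1"] by simp
  moreover have "0 \<le> \<Gamma>"
    by (rule order_trans[OF norm_ge_zero]) (use G_bdd \<open>i0 \<in> I\<close> \<open>k0 \<in> E\<close> in blast)
  ultimately have coef: "0 \<le> real (card E) * L * \<Gamma>" by (intro mult_nonneg_nonneg) auto
  have "grpinner I p (alignment \<psi> G E q p)
      \<le> (\<Sum>i\<in>I. \<Sum>j\<in>I. real (card E) * (L * norm (q i - q j) * \<Gamma>) * norm (p i - p j))"
    unfolding grpinner_def
  proof (intro sum_mono inner_alignment_diff_le ballI)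
    fix i j k assume "i \<in> I" "j \<in> I" "k \<in> E"
    then show "0 \<le> \<psi> (norm (q k - q j))" using nonneg by auto
    have "\<bar>\<psi> (norm (q k - q i)) - \<psi> (norm (q k - q j))\<bar>
        \<le> L * \<bar>norm (q k - q i) - norm (q k - q j)\<bar>"
      using lip sep \<open>i \<in> I\<close> \<open>j \<in> I\<close> \<open>k \<in> E\<close> by auto
    also have "\<dots> \<le> L * norm (q i - q j)"
      using norm_triangle_ineq3[of "q k - q i" "q k - q j"] \<open>0 \<le> L\<close>
      by (intro mult_left_mono) (auto simp: norm_minus_commute)
    finally show "\<bar>\<psi> (norm (q k - q i)) - \<psi> (norm (q k - q j))\<bar> * norm (G (p k) - G (p i))
        \<le> L * norm (q i - q j) * \<Gamma>"
      using G_bdd \<open>i \<in> I\<close> \<open>k \<in> E\<close> \<open>0 \<le> L\<close> by (intro mult_mono) auto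
  next
    fix i j assume "i \<in> I" "j \<in> I"
    then show "0 \<le> inner (p i - p j) (G (p i) - G (p j))" using G_mono by auto
  qed
  also have "\<dots> = real (card E) * L * \<Gamma> * (\<Sum>i\<in>I. \<Sum>j\<in>I. norm (p i - p j) * norm (q i - q j))"
    by (simp add: sum_distrib_left mult_ac)
  also have "\<dots> \<le> real (card E) * L * \<Gamma> * (grpnorm I p * grpnorm I q)"
    by (intro mult_left_mono sum_norm_mult_le_grpnorm coef \<open>finite I\<close>)
  finally show ?thesis by (simp add: mult_ac)
qed

lemma grpinner_alignment_max_le:
  fixes p q :: "nat \<Rightarrow> 'a::real_inner"
  assumes "finite I"
    and W: "\<forall>i\<in>I. \<forall>k\<in>E. \<bar>\<psi> (norm (q k - q i))\<bar> \<le> W"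
    and G_bdd: "\<forall>i\<in>I. \<forall>k\<in>E. norm (G (p k) - G (p i)) \<le> \<Gamma>"
  shows "grpinner I p (alignment \<psi> G E q p) \<le> 2 * real (card E) * W * \<Gamma> * real (card I) * grpnorm I p"
proof (cases "I = {} \<or> E = {}")
  case True
  then show ?thesis by (auto simp: grpinner_def alignment_def grpnorm_def)
next
  case False
  then obtain i0 k0 where "i0 \<in> I" "k0 \<in> E" by blast
  have "0 \<le> W"
    by (rule order_trans[OF abs_ge_zero]) (use W \<open>i0 \<in> I\<close> \<open>k0 \<in> E\<close> in blast)
  moreover have "0 \<le> \<Gamma>"
    by (rule order_trans[OF norm_ge_zero]) (use G_bdd \<open>i0 \<in> I\<close> \<open>k0 \<in> E\<close> in blast)
  ultimately have coef: "0 \<le> 2 * real (card E) * W * \<Gamma>" by (intro mult_nonneg_nonneg) auto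
  have "grpinner I p (alignment \<psi> G E q p)
      \<le> 2 * (\<Sum>i\<in>I. \<Sum>j\<in>I. real (card E) * (W * \<Gamma>) * norm (p i - p j))"
    unfolding grpinner_eq_double_sum
  proof (intro mult_left_mono sum_mono inner_alignment_le ballI)
    fix i k assume "i \<in> I" "k \<in> E"
    with W G_bdd \<open>0 \<le> W\<close> show "\<bar>\<psi> (norm (q k - q i))\<bar> * norm (G (p k) - G (p i)) \<le> W * \<Gamma>"
      by (intro mult_mono) auto
  qed simp
  also have "\<dots> = 2 * real (card E) * W * \<Gamma> * (\<Sum>i\<in>I. \<Sum>j\<in>I. norm (p i - p j))"
    by (simp add: sum_distrib_left mult_ac)
  also have "\<dots> \<le> 2 * real (card E) * W * \<Gamma> * (real (card I) * grpnorm I p)"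
    by (intro mult_left_mono sum_norm_le_grpnorm coef \<open>finite I\<close>)
  finally show ?thesis by (simp add: mult_ac)
qed

section \<open>The communication kernel\<close>

lemma nonneg_if_pos_right_continuous:
  fixes \<psi> :: "real \<Rightarrow> real"
  assumes pos: "\<forall>r>0. 0 < \<psi> r" and lim: "(\<psi> \<longlongrightarrow> \<psi> 0) (at_right 0)" and "0 \<le> r"
  shows "0 \<le> \<psi> r"
proof -
  have "0 \<le> \<psi> 0"
    using eventually_at_right_less[of "0::real"]
    by (intro tendsto_lowerbound[OF lim]) (auto elim!: eventually_mono simp: pos less_imp_le)
  with pos \<open>0 \<le> r\<close> show ?thesis by (cases "r = 0") (auto simp: less_imp_le)
qed

lemma antimono_if_right_continuous:
  fixes \<psi> :: "real \<Rightarrow> real"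
  assumes anti: "\<forall>r s. 0 < r \<and> r \<le> s \<longrightarrow> \<psi> s \<le> \<psi> r" and lim: "(\<psi> \<longlongrightarrow> \<psi> 0) (at_right 0)"
  shows "antimono_on {0..} \<psi>"
proof (rule monotone_onI)
  fix r s :: real assume "r \<in> {0..}" "s \<in> {0..}" "r \<le> s"
  moreover have "\<psi> s \<le> \<psi> 0" if "0 < s"
    using eventually_at_right_real[OF that]
    by (intro tendsto_lowerbound[OF lim]) (auto elim!: eventually_mono simp: anti)
  ultimately show "\<psi> s \<le> \<psi> r"
    using anti by (cases "r = 0"; cases "s = 0") auto
qed

lemma lipschitz_if_right_continuous:
  fixes \<psi> :: "real \<Rightarrow> real"
  assumes lip: "\<forall>r>0. \<forall>s>0. \<bar>\<psi> r - \<psi> s\<bar> \<le> L * \<bar>r - s\<bar>" and lim: "(\<psi> \<longlongrightarrow> \<psi> 0) (at_right 0)"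
    and "0 \<le> r" "0 \<le> s"
  shows "\<bar>\<psi> r - \<psi> s\<bar> \<le> L * \<bar>r - s\<bar>"
proof -
  have at0: "\<bar>\<psi> 0 - \<psi> s\<bar> \<le> L * \<bar>0 - s\<bar>" if "0 < s" for s
  proof (rule tendsto_le[OF trivial_limit_at_right_real])
    show "((\<lambda>x. L * \<bar>x - s\<bar>) \<longlongrightarrow> L * \<bar>0 - s\<bar>) (at_right 0)"
      by (intro tendsto_intros tendsto_ident_at)
    show "((\<lambda>x. \<bar>\<psi> x - \<psi> s\<bar>) \<longlongrightarrow> \<bar>\<psi> 0 - \<psi> s\<bar>) (at_right 0)"
      by (intro tendsto_intros lim)
    show "\<forall>\<^sub>F x in at_right 0. \<bar>\<psi> x - \<psi> s\<bar> \<le> L * \<bar>x - s\<bar>"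
      using eventually_at_right_less[of "0::real"] by eventually_elim (use lip that in auto)
  qed
  show ?thesis
    using lip at0[of r] at0[of s] \<open>0 \<le> r\<close> \<open>0 \<le> s\<close>
    by (cases "r = 0"; cases "s = 0") (auto simp: abs_minus_commute)
qed

lemma bdd_above_dquot:
  assumes "\<forall>r s. a \<le> r \<longrightarrow> a \<le> s \<longrightarrow> \<bar>\<psi> r - \<psi> s\<bar> \<le> L * \<bar>r - s\<bar>"
  shows "bdd_above (dquot \<psi> a)"
proof (rule bdd_aboveI)
  fix x assume "x \<in> dquot \<psi> a"
  then obtain r s where "x = \<bar>(\<psi> r - \<psi> s) / (r - s)\<bar>" "a \<le> r" "a \<le> s" "r \<noteq> s"
    unfolding dquot_def by blast
  with assms show "x \<le> L" by (simp add: abs_divide divide_le_eq)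
qed

lemma abs_diff_le_Lpsi:
  assumes "bdd_above (dquot \<psi> a)" "a \<le> r" "a \<le> s"
  shows "\<bar>\<psi> r - \<psi> s\<bar> \<le> Lpsi \<psi> a * \<bar>r - s\<bar>"
proof (cases "r = s")
  case False
  with assms have "\<bar>(\<psi> r - \<psi> s) / (r - s)\<bar> \<le> Lpsi \<psi> a"
    unfolding Lpsi_def dquot_def by (intro cSup_upper) auto
  with False show ?thesis by (simp add: abs_divide divide_le_eq)
qed simp

lemma Lpsi_nonneg:
  assumes "bdd_above (dquot \<psi> a)"
  shows "0 \<le> Lpsi \<psi> a"
  using abs_diff_le_Lpsi[OF assms, of a "a + 1"] by simp

lemma qmin_le:
  assumes "i \<in> {1..l}" "j \<in> {1..N} - {1..l}"
  shows "qmin N l x \<le> norm (x i - x j)"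
  unfolding qmin_def using assms by (intro Min_le finite_image_set2) auto

lemma qmin_nonneg:
  assumes "1 \<le> l" "l < N"
  shows "0 \<le> qmin N l x"
proof -
  let ?D = "{norm (x i - x j) | i j. i \<in> {1..l} \<and> j \<in> {1..N} - {1..l}}"
  have "norm (x 1 - x N) \<in> ?D"
    by (rule CollectI, rule exI[of _ 1], rule exI[of _ N]) (use assms in auto)
  then have "qmin N l x \<in> ?D"
    unfolding qmin_def by (intro Min_in finite_image_set2) auto
  then show ?thesis by auto
qed

lemma psimax_ge:
  assumes "i \<in> {1..l}" "j \<in> {1..N} - {1..l}"
  shows "\<psi> (norm (x i - x j)) \<le> psimax \<psi> N l x"
  unfolding psimax_def using assms by (intro Max_ge finite_image_set2) auto

section \<open>Maximum principle\<close>

lemma first_time_nonneg: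
  fixes f :: "nat \<Rightarrow> real \<Rightarrow> real"
  assumes "finite K" and cont: "\<forall>j\<in>K. continuous_on {0..t1} (f j)"
    and "j0 \<in> K" "0 \<le> t1" "0 \<le> f j0 t1"
  obtains T j where "0 \<le> T" "j \<in> K" "0 \<le> f j T" "\<forall>s\<in>{0..<T}. \<forall>k\<in>K. f k s < 0"
proof -
  define Z where "Z = (\<Union>j\<in>K. {s \<in> {0..t1}. (\<lambda>_. 0) s \<le> f j s})"
  have "closed Z"
    unfolding Z_def using \<open>finite K\<close> cont
    by (intro closed_UN ballI continuous_on_closed_Collect_le continuous_on_const) auto
  moreover have "Z \<noteq> {}" "bdd_below Z"
    using assms(3-5) by (auto simp: Z_def intro!: bdd_belowI[of _ 0])
  ultimately have "Inf Z \<in> Z" by (intro closed_contains_Inf)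
  then obtain j where "j \<in> K" "0 \<le> Inf Z" "0 \<le> f j (Inf Z)" by (auto simp: Z_def)
  moreover have "\<forall>s\<in>{0..<Inf Z}. \<forall>k\<in>K. f k s < 0"
  proof (intro ballI)
    fix s k assume s: "s \<in> {0..<Inf Z}" and "k \<in> K"
    with \<open>bdd_below Z\<close> have "s \<notin> Z" by (meson atLeastLessThan_iff cInf_lower not_le)
    moreover have "s \<le> t1" using s \<open>Inf Z \<in> Z\<close> by (auto simp: Z_def)
    ultimately show "f k s < 0" using s \<open>k \<in> K\<close> by (auto simp: Z_def)
  qed
  ultimately show ?thesis using that by blast
qed

text \<open>The perturbation \<open>\<epsilon> (1 + t)\<close> turns the non-strict sign condition on the force into a
  strict sign of the derivative at the first time the ball is left.\<close>
lemma norm_le_initial_bound: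
  fixes p :: "nat \<Rightarrow> real \<Rightarrow> 'a::real_inner"
  assumes "finite K"
    and cont: "\<forall>i\<in>K. continuous_on {0..} (p i)"
    and deriv: "\<forall>i\<in>K. \<forall>t>0. (p i has_vector_derivative v i t) (at t)"
    and inward: "\<forall>i\<in>K. \<forall>t>0. (\<forall>k\<in>K. norm (p k t) \<le> norm (p i t)) \<longrightarrow> inner (p i t) (v i t) \<le> 0"
    and init: "\<forall>i\<in>K. norm (p i 0) \<le> R"
  shows "\<forall>t\<ge>0. \<forall>i\<in>K. norm (p i t) \<le> R"
proof (rule ccontr)
  assume "\<not> ?thesis"
  then obtain t1 i0 where "0 \<le> t1" "i0 \<in> K" and exit: "R < norm (p i0 t1)" by (auto simp: not_le)
  have "0 \<le> R" using init \<open>i0 \<in> K\<close> norm_ge_zero order_trans by blast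
  define \<epsilon> where "\<epsilon> = ((norm (p i0 t1))\<^sup>2 - R\<^sup>2) / (2 * (1 + t1))"
  have "R\<^sup>2 < (norm (p i0 t1))\<^sup>2" using exit \<open>0 \<le> R\<close> by (simp add: power_strict_mono)
  moreover have "\<epsilon> * (1 + t1) = ((norm (p i0 t1))\<^sup>2 - R\<^sup>2) / 2"
    using \<open>0 \<le> t1\<close> by (simp add: \<epsilon>_def field_simps add_nonneg_eq_0_iff)
  ultimately have "0 < \<epsilon>" "\<epsilon> * (1 + t1) < (norm (p i0 t1))\<^sup>2 - R\<^sup>2"
    using \<open>0 \<le> t1\<close> by (auto simp: \<epsilon>_def)
  define f where "f j s = (norm (p j s))\<^sup>2 - R\<^sup>2 - \<epsilon> * (1 + s)" for j s
  have "continuous_on {0..t1} (f j)" if "j \<in> K" for j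
    using continuous_on_subset[of _ "p j"] cont that unfolding f_def
    by (intro continuous_intros) auto
  moreover have "0 \<le> f i0 t1" using \<open>\<epsilon> * (1 + t1) < _\<close> by (simp add: f_def)
  ultimately obtain T j where T: "0 \<le> T" "j \<in> K" "0 \<le> f j T"
    and before: "\<forall>s\<in>{0..<T}. \<forall>k\<in>K. f k s < 0"
    using first_time_nonneg[OF \<open>finite K\<close> _ \<open>i0 \<in> K\<close> \<open>0 \<le> t1\<close>] by blast
  obtain i where "i \<in> K" and imax: "\<forall>k\<in>K. norm (p k T) \<le> norm (p i T)"
    using ex_is_arg_min_if_finite[OF \<open>finite K\<close>, of "\<lambda>k. - norm (p k T)"] T(2)
    by (auto simp: is_arg_min_def not_less)
  have "(norm (p j T))\<^sup>2 \<le> (norm (p i T))\<^sup>2" using imax T(2) by (simp add: power_mono)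
  with T(3) have "0 \<le> f i T" unfolding f_def by linarith
  have "(norm (p i 0))\<^sup>2 \<le> R\<^sup>2" using init \<open>i \<in> K\<close> by (simp add: power_mono)
  with \<open>0 \<le> f i T\<close> \<open>0 < \<epsilon>\<close> T(1) have "0 < T" by (cases "T = 0") (auto simp: f_def)
  have "((\<lambda>s. (norm (p i s))\<^sup>2 - R\<^sup>2 - \<epsilon> * (1 + s))
      has_real_derivative 2 * inner (p i T) (v i T) - 0 - \<epsilon> * (0 + 1)) (at T)"
    using deriv \<open>i \<in> K\<close> \<open>0 < T\<close>
    by (intro DERIV_diff DERIV_cmult DERIV_add DERIV_const DERIV_ident has_real_derivative_norm_sq) auto
  then have deriv_f: "(f i has_real_derivative 2 * inner (p i T) (v i T) - \<epsilon>) (at T)"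
    by (simp add: f_def[abs_def])
  have "inner (p i T) (v i T) \<le> 0" using inward \<open>i \<in> K\<close> \<open>0 < T\<close> imax by blast
  with \<open>0 < \<epsilon>\<close> have "2 * inner (p i T) (v i T) - \<epsilon> < 0" by simp
  from DERIV_neg_dec_left[OF deriv_f this]
  obtain d where "0 < d" and dec: "\<forall>h>0. h < d \<longrightarrow> f i T < f i (T - h)" by blast
  define h where "h = min (d / 2) T"
  have "0 < h" "h < d" "h \<le> T" using \<open>0 < d\<close> \<open>0 < T\<close> by (auto simp: h_def)
  then have "f i T < f i (T - h)" "f i (T - h) < 0" using dec before \<open>i \<in> K\<close> by auto
  with \<open>0 \<le> f i T\<close> show False by simp
qed

lemma inner_alignment_nonpos_at_max:
  fixes p q :: "nat \<Rightarrow> 'a::real_inner"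
  assumes "g 0 = 0" "mono_on {0..} g"
    and "\<forall>k\<in>K. 0 \<le> \<psi> (norm (q k - q i))" and "\<forall>k\<in>K. norm (p k) \<le> norm (p i)"
  shows "inner (p i) (alignment \<psi> (velG g) K q p i) \<le> 0"
  unfolding alignment_def inner_sum_right inner_scaleR_right
  using assms inner_velG_diff_nonpos[OF assms(1,2)] by (auto intro!: sum_nonpos mult_nonneg_nonpos)

lemma alignment_velocity_bounded:
  fixes p q :: "nat \<Rightarrow> real \<Rightarrow> 'a::real_inner"
  assumes "finite K" and g0: "g 0 = 0" and g_mono: "mono_on {0..} g"
    and "0 \<le> c" and \<psi>_nonneg: "\<forall>r\<ge>0. 0 \<le> \<psi> r"
    and cont: "\<forall>i\<in>K. continuous_on {0..} (p i)"
    and deriv: "\<forall>i\<in>K. \<forall>t>0. (p i has_vector_derivative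
      c *\<^sub>R alignment \<psi> (velG g) K (\<lambda>k. q k t) (\<lambda>k. p k t) i) (at t)"
    and init: "\<forall>i\<in>K. norm (p i 0) \<le> R"
  shows "\<forall>t\<ge>0. \<forall>i\<in>K. norm (p i t) \<le> R"
proof (rule norm_le_initial_bound[OF \<open>finite K\<close> cont deriv _ init], intro ballI allI impI)
  fix i t assume "\<forall>k\<in>K. norm (p k t) \<le> norm (p i t)"
  with \<psi>_nonneg have "inner (p i t) (alignment \<psi> (velG g) K (\<lambda>k. q k t) (\<lambda>k. p k t) i) \<le> 0"
    by (intro inner_alignment_nonpos_at_max[OF g0 g_mono]) auto
  with \<open>0 \<le> c\<close> show "inner (p i t) (c *\<^sub>R alignment \<psi> (velG g) K (\<lambda>k. q k t) (\<lambda>k. p k t) i) \<le> 0"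
    unfolding inner_scaleR_right by (rule mult_nonneg_nonpos)
qed

section \<open>Estimates for a group of agents\<close>

text \<open>In the application \<open>G = velG g\<close>, \<open>m = calM\<close>, \<open>M = M\<^sub>G'\<close> and \<open>R = P\<^sup>0\<^sub>M\<close>.\<close>
context
  fixes N l :: nat and \<kappa> m M R L :: real and \<psi> :: "real \<Rightarrow> real" and G :: "'a::real_inner \<Rightarrow> 'a"
  assumes l: "l \<in> {1..N}" and "0 \<le> \<kappa>" "0 \<le> m" "0 \<le> M"
    and G_mono: "\<forall>u v. norm u \<le> R \<longrightarrow> norm v \<le> R \<longrightarrow> m * (norm (u - v))\<^sup>2 \<le> inner (u - v) (G u - G v)"
    and G_bdd: "\<forall>u. norm u \<le> R \<longrightarrow> norm (G u) \<le> M * R"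
    and \<psi>_nonneg: "\<forall>r\<ge>0. 0 \<le> \<psi> r" and \<psi>_anti: "antimono_on {0..} \<psi>"
    and \<psi>_lip: "\<forall>r\<ge>0. \<forall>s\<ge>0. \<bar>\<psi> r - \<psi> s\<bar> \<le> L * \<bar>r - s\<bar>"
begin

lemma bdd_above_dquot_qmin:
  assumes "l < N"
  shows "bdd_above (dquot \<psi> (qmin N l q))"
proof -
  from assms l have "0 \<le> qmin N l q" by (intro qmin_nonneg) auto
  with \<psi>_lip show ?thesis by (intro bdd_above_dquot[of _ _ L]) auto
qed

lemma group_velocity_monotone:
  assumes "\<forall>i\<in>{1..N}. norm (p i) \<le> R"
  shows "\<forall>i\<in>{1..l}. \<forall>j\<in>{1..l}. m * (norm (p i - p j))\<^sup>2 \<le> inner (p i - p j) (G (p i) - G (p j))"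
  using G_mono assms l by auto

lemma velocity_diff_bound:
  assumes "\<forall>i\<in>{1..N}. norm (p i) \<le> R" "i \<in> {1..N}" "k \<in> {1..N}"
  shows "norm (G (p k) - G (p i)) \<le> 2 * (M * R)"
proof -
  have "norm (G (p k)) \<le> M * R" "norm (G (p i)) \<le> M * R" using G_bdd assms by auto
  then show ?thesis using norm_triangle_ineq4[of "G (p k)" "G (p i)"] by simp
qed

lemma group_internal_le:
  assumes "\<forall>i\<in>{1..N}. norm (p i) \<le> R"
  shows "grpinner {1..l} p (alignment \<psi> G {1..l} q p)
    \<le> - (real l * \<psi> (grpnorm {1..l} q) * m) * (grpnorm {1..l} p)\<^sup>2"
proof -
  have weights: "\<forall>i\<in>{1..l}. \<forall>k\<in>{1..l}. \<psi> (grpnorm {1..l} q) \<le> \<psi> (norm (q k - q i))"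
  proof (intro ballI)
    fix i k assume "i \<in> {1..l}" "k \<in> {1..l}"
    show "\<psi> (grpnorm {1..l} q) \<le> \<psi> (norm (q k - q i))"
    proof (rule monotone_onD[OF \<psi>_anti])
      show "norm (q k - q i) \<le> grpnorm {1..l} q"
        using norm_le_grpnorm[OF _ \<open>k \<in> {1..l}\<close> \<open>i \<in> {1..l}\<close>] by simp
    qed (auto simp: grpnorm_nonneg)
  qed
  have "0 \<le> \<psi> (grpnorm {1..l} q)" using \<psi>_nonneg by (simp add: grpnorm_nonneg)
  from grpinner_alignment_self_le[OF _ \<open>0 \<le> m\<close> this weights group_velocity_monotone[OF assms]]
  show ?thesis by simp
qed

lemma group_external_lipschitz_le:
  assumes p_bdd: "\<forall>i\<in>{1..N}. norm (p i) \<le> R"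
  shows "grpinner {1..l} p (alignment \<psi> G ({1..N} - {1..l}) q p)
    \<le> real (N - l) * Lpsi \<psi> (qmin N l q) * (2 * (M * R)) * grpnorm {1..l} p * grpnorm {1..l} q"
proof (cases "l < N")
  case True
  from bdd_above_dquot_qmin[OF True] have lip: "\<forall>r s. qmin N l q \<le> r \<longrightarrow> qmin N l q \<le> s \<longrightarrow>
      \<bar>\<psi> r - \<psi> s\<bar> \<le> Lpsi \<psi> (qmin N l q) * \<bar>r - s\<bar>"
    using abs_diff_le_Lpsi by blast
  have sep: "\<forall>i\<in>{1..l}. \<forall>k\<in>{1..N} - {1..l}. qmin N l q \<le> norm (q k - q i)"
    using qmin_le[of _ l _ N q] by (simp add: norm_minus_commute)
  have nonneg: "\<forall>i\<in>{1..l}. \<forall>k\<in>{1..N} - {1..l}. 0 \<le> \<psi> (norm (q k - q i))" using \<psi>_nonneg by simp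
  have mono: "\<forall>i\<in>{1..l}. \<forall>j\<in>{1..l}. 0 \<le> inner (p i - p j) (G (p i) - G (p j))"
  proof (intro ballI)
    fix i j assume "i \<in> {1..l}" "j \<in> {1..l}"
    have "0 \<le> m * (norm (p i - p j))\<^sup>2" using \<open>0 \<le> m\<close> by simp
    also have "\<dots> \<le> inner (p i - p j) (G (p i) - G (p j))"
      using group_velocity_monotone[OF p_bdd] \<open>i \<in> {1..l}\<close> \<open>j \<in> {1..l}\<close> by blast
    finally show "0 \<le> inner (p i - p j) (G (p i) - G (p j))" .
  qed
  have G_diff: "\<forall>i\<in>{1..l}. \<forall>k\<in>{1..N} - {1..l}. norm (G (p k) - G (p i)) \<le> 2 * (M * R)"
    using velocity_diff_bound[OF p_bdd] l by auto
  from grpinner_alignment_lipschitz_le[OF _ lip sep nonneg mono G_diff]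
  show ?thesis using l by (simp add: card_Diff_subset)
qed (use l in \<open>simp add: grpinner_def alignment_def\<close>)

lemma group_external_max_le:
  assumes p_bdd: "\<forall>i\<in>{1..N}. norm (p i) \<le> R"
  shows "grpinner {1..l} p (alignment \<psi> G ({1..N} - {1..l}) q p)
    \<le> 2 * real (N - l) * psimax \<psi> N l q * (2 * (M * R)) * real l * grpnorm {1..l} p"
proof -
  have W: "\<forall>i\<in>{1..l}. \<forall>k\<in>{1..N} - {1..l}. \<bar>\<psi> (norm (q k - q i))\<bar> \<le> psimax \<psi> N l q"
    using psimax_ge[of _ l _ N \<psi> q] \<psi>_nonneg by (simp add: norm_minus_commute)
  have G_diff: "\<forall>i\<in>{1..l}. \<forall>k\<in>{1..N} - {1..l}. norm (G (p k) - G (p i)) \<le> 2 * (M * R)"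
    using velocity_diff_bound[OF p_bdd] l by auto
  have "card ({1..N} - {1..l}) = N - l" "card {1..l} = l" using l by (simp_all add: card_Diff_subset)
  with grpinner_alignment_max_le[where G = G and p = p, OF _ W G_diff] show ?thesis by simp
qed

lemma external_coefficients_nonneg:
  assumes "\<forall>i\<in>{1..N}. norm (p i) \<le> R"
  shows "0 \<le> (2 * \<kappa> * M * real (N - l) * R * Lpsi \<psi> (qmin N l q) / real N) * grpnorm {1..l} q"
    and "0 \<le> (4 * \<kappa> * R * M * real l * real (N - l) / real N) * psimax \<psi> N l q"
proof -
  have "0 \<le> R" using assms l by (auto intro: order_trans[OF norm_ge_zero])
  show "0 \<le> (2 * \<kappa> * M * real (N - l) * R * Lpsi \<psi> (qmin N l q) / real N) * grpnorm {1..l} q"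
  proof (cases "l < N")
    case True
    then have "0 \<le> Lpsi \<psi> (qmin N l q)" by (intro Lpsi_nonneg bdd_above_dquot_qmin)
    with \<open>0 \<le> \<kappa>\<close> \<open>0 \<le> M\<close> \<open>0 \<le> R\<close> show ?thesis by (simp add: grpnorm_nonneg)
  qed (use l in simp)
  show "0 \<le> (4 * \<kappa> * R * M * real l * real (N - l) / real N) * psimax \<psi> N l q"
  proof (cases "l < N")
    case True
    with l have "\<psi> (norm (q 1 - q N)) \<le> psimax \<psi> N l q" by (intro psimax_ge) auto
    moreover have "0 \<le> \<psi> (norm (q 1 - q N))" using \<psi>_nonneg by simp
    ultimately have "0 \<le> psimax \<psi> N l q" by linarith
    with \<open>0 \<le> \<kappa>\<close> \<open>0 \<le> M\<close> \<open>0 \<le> R\<close> show ?thesis by simp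
  qed (use l in simp)
qed

lemma group_dissipation_bounds:
  fixes p q :: "nat \<Rightarrow> 'a"
  assumes p_bdd: "\<forall>i\<in>{1..N}. norm (p i) \<le> R"
  defines "nP \<equiv> grpnorm {1..l} p" and "nQ \<equiv> grpnorm {1..l} q"
  shows "grpinner {1..l} p (\<lambda>i. (\<kappa> / real N) *\<^sub>R alignment \<psi> G {1..N} q p i)
      \<le> nP * (- (\<kappa> * m * real l / real N) * \<psi> nQ * nP
               + (2 * \<kappa> * M * real (N - l) * R * Lpsi \<psi> (qmin N l q) / real N) * nQ)"
    and "grpinner {1..l} p (\<lambda>i. (\<kappa> / real N) *\<^sub>R alignment \<psi> G {1..N} q p i)
      \<le> nP * (- (\<kappa> * m * real l / real N) * \<psi> nQ * nP
               + (4 * \<kappa> * R * M * real l * real (N - l) / real N) * psimax \<psi> N l q)"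
proof -
  define E where "E = {1..N} - {1..l}"
  have "{1..N} = {1..l} \<union> E" "finite E" "{1..l} \<inter> E = {}" using l by (auto simp: E_def)
  then have split: "grpinner {1..l} p (\<lambda>i. (\<kappa> / real N) *\<^sub>R alignment \<psi> G {1..N} q p i)
      = (\<kappa> / real N) * (grpinner {1..l} p (alignment \<psi> G {1..l} q p) + grpinner {1..l} p (alignment \<psi> G E q p))"
    by (simp only: alignment_Un[OF finite_atLeastAtMost] grpinner_scaleR_right grpinner_add_right)
  have "0 < real N" using l by simp
  note internal = group_internal_le[OF p_bdd]
  show "grpinner {1..l} p (\<lambda>i. (\<kappa> / real N) *\<^sub>R alignment \<psi> G {1..N} q p i)
      \<le> nP * (- (\<kappa> * m * real l / real N) * \<psi> nQ * nP
               + (2 * \<kappa> * M * real (N - l) * R * Lpsi \<psi> (qmin N l q) / real N) * nQ)"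
    unfolding split E_def
    by (rule order_trans[OF mult_left_mono[OF add_mono[OF internal group_external_lipschitz_le[OF p_bdd]]]])
      (use \<open>0 \<le> \<kappa>\<close> \<open>0 < real N\<close> in \<open>simp_all add: nP_def nQ_def field_simps power2_eq_square\<close>)
  show "grpinner {1..l} p (\<lambda>i. (\<kappa> / real N) *\<^sub>R alignment \<psi> G {1..N} q p i)
      \<le> nP * (- (\<kappa> * m * real l / real N) * \<psi> nQ * nP
               + (4 * \<kappa> * R * M * real l * real (N - l) / real N) * psimax \<psi> N l q)"
    unfolding split E_def
    by (rule order_trans[OF mult_left_mono[OF add_mono[OF internal group_external_max_le[OF p_bdd]]]])
      (use \<open>0 \<le> \<kappa>\<close> \<open>0 < real N\<close> in \<open>simp_all add: nP_def nQ_def field_simps power2_eq_square\<close>)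
qed

lemma group_velocity_estimates:
  fixes p q :: "nat \<Rightarrow> real \<Rightarrow> 'a"
  assumes "\<forall>i\<in>{1..N}. norm (p i t) \<le> R"
    and p_deriv: "\<forall>i\<in>{1..N}. (p i has_vector_derivative
      (\<kappa> / real N) *\<^sub>R alignment \<psi> G {1..N} (\<lambda>k. q k t) (\<lambda>k. p k t) i) (at t)"
  shows "(l < N \<longrightarrow> bdd_above (dquot \<psi> (qmin N l (\<lambda>i. q i t)))) \<and>
     (\<forall>D. ((\<lambda>s. grpnorm {1..l} (\<lambda>i. p i s)) has_real_derivative D) (at t) \<longrightarrow>
       D \<le> - (\<kappa> * m * real l / real N) * \<psi> (grpnorm {1..l} (\<lambda>i. q i t))
                 * grpnorm {1..l} (\<lambda>i. p i t)
            + (2 * \<kappa> * M * real (N - l) * R * Lpsi \<psi> (qmin N l (\<lambda>i. q i t)) / real N)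
                 * grpnorm {1..l} (\<lambda>i. q i t)
       \<and> D \<le> - (\<kappa> * m * real l / real N) * \<psi> (grpnorm {1..l} (\<lambda>i. q i t))
                 * grpnorm {1..l} (\<lambda>i. p i t)
            + (4 * \<kappa> * R * M * real l * real (N - l) / real N)
                 * psimax \<psi> N l (\<lambda>i. q i t))"
proof (intro conjI impI allI)
  assume "l < N"
  then show "bdd_above (dquot \<psi> (qmin N l (\<lambda>i. q i t)))" by (rule bdd_above_dquot_qmin)
next
  fix D assume D: "((\<lambda>s. grpnorm {1..l} (\<lambda>i. p i s)) has_real_derivative D) (at t)"
  have derivs: "\<forall>i\<in>{1..l}. (p i has_vector_derivative
      (\<kappa> / real N) *\<^sub>R alignment \<psi> G {1..N} (\<lambda>k. q k t) (\<lambda>k. p k t) i) (at t)"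
    using p_deriv l by auto
  note bounds = group_dissipation_bounds[of "\<lambda>i. p i t" "\<lambda>i. q i t", OF assms(1)]
    external_coefficients_nonneg[of "\<lambda>i. p i t" "\<lambda>i. q i t", OF assms(1)]
  show "D \<le> - (\<kappa> * m * real l / real N) * \<psi> (grpnorm {1..l} (\<lambda>i. q i t)) * grpnorm {1..l} (\<lambda>i. p i t)
      + (2 * \<kappa> * M * real (N - l) * R * Lpsi \<psi> (qmin N l (\<lambda>i. q i t)) / real N) * grpnorm {1..l} (\<lambda>i. q i t)"
    using grpnorm_deriv_le[OF derivs D bounds(1,3)] by simp
  show "D \<le> - (\<kappa> * m * real l / real N) * \<psi> (grpnorm {1..l} (\<lambda>i. q i t)) * grpnorm {1..l} (\<lambda>i. p i t)
      + (4 * \<kappa> * R * M * real l * real (N - l) / real N) * psimax \<psi> N l (\<lambda>i. q i t)"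
    using grpnorm_deriv_le[OF derivs D bounds(2,4)] by simp
qed
end


theorem lemma2p1:
  fixes N l :: nat and \<kappa> :: real and g g' \<psi> :: "real \<Rightarrow> real"
    and q p :: "nat \<Rightarrow> real \<Rightarrow> 'a::euclidean_space"
  assumes N: "N \<ge> 1" and kappa: "\<kappa> > 0" and l: "l \<in> {1..N}"
    and g_deriv: "\<forall>r\<ge>0. (g has_real_derivative g' r) (at r within {0..})"
    and g'_cont: "continuous_on {0..} g'"
    and g0: "g 0 = 0"
    and g'_bounds: "\<forall>b\<ge>0. \<exists>m M. 0 < m \<and> (\<forall>r\<in>{0..b}. m \<le> g' r \<and> g' r \<le> M)"
    and g_cvx: "convex_on {0<..} g \<or> concave_on {0<..} g"
    and psi_pos: "\<forall>r>0. \<psi> r > 0"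
    and psi_bdd: "\<exists>B. \<forall>r>0. \<bar>\<psi> r\<bar> \<le> B"
    and psi_lip: "\<exists>L. \<forall>r>0. \<forall>s>0. \<bar>\<psi> r - \<psi> s\<bar> \<le> L * \<bar>r - s\<bar>"
    and psi_mono: "\<forall>r s. 0 < r \<and> r \<le> s \<longrightarrow> \<psi> s \<le> \<psi> r"
    and psi_0: "(\<psi> \<longlongrightarrow> \<psi> 0) (at_right 0)"
    and q_cont: "\<forall>i\<in>{1..N}. continuous_on {0..} (q i)"
    and p_cont: "\<forall>i\<in>{1..N}. continuous_on {0..} (p i)"
    and q_ode: "\<forall>i\<in>{1..N}. \<forall>t>0. (q i has_vector_derivative velG g (p i t)) (at t)"
    and p_ode: "\<forall>i\<in>{1..N}. \<forall>t>0. (p i has_vector_derivative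
         (\<kappa> / real N) *\<^sub>R (\<Sum>k\<in>{1..N}. \<psi> (norm (q k t - q i t)) *\<^sub>R
            (velG g (p k t) - velG g (p i t)))) (at t)"
  defines "P0M \<equiv> Max ((\<lambda>i. norm (p i 0)) ` {1..N})"
  defines "MG \<equiv> Sup (g' ` {0..P0M})"
    and "mG \<equiv> Inf (g' ` {0..P0M})"
  defines "calM \<equiv> min mG (mG^2 / MG)"
  shows "\<forall>t>0. (l < N \<longrightarrow> bdd_above (dquot \<psi> (qmin N l (\<lambda>i. q i t)))) \<and>
     (\<forall>D. ((\<lambda>s. grpnorm {1..l} (\<lambda>i. p i s)) has_real_derivative D) (at t) \<longrightarrow>
       D \<le> - (\<kappa> * calM * real l / real N) * \<psi> (grpnorm {1..l} (\<lambda>i. q i t))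
                 * grpnorm {1..l} (\<lambda>i. p i t)
            + (2 * \<kappa> * MG * real (N - l) * P0M * Lpsi \<psi> (qmin N l (\<lambda>i. q i t)) / real N)
                 * grpnorm {1..l} (\<lambda>i. q i t)
       \<and> D \<le> - (\<kappa> * calM * real l / real N) * \<psi> (grpnorm {1..l} (\<lambda>i. q i t))
                 * grpnorm {1..l} (\<lambda>i. p i t)
            + (4 * \<kappa> * P0M * MG * real l * real (N - l) / real N)
                 * psimax \<psi> N l (\<lambda>i. q i t))"
proof -
  have P0M_ge: "\<forall>i\<in>{1..N}. norm (p i 0) \<le> P0M"
    unfolding P0M_def by (auto intro: Max_ge)
  have "0 \<le> P0M" by (rule order_trans[OF norm_ge_zero]) (use P0M_ge N in auto)
  from velocity_control_bounds[OF g_deriv g'_bounds this, folded mG_def MG_def]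
  have g_mono: "mono_on {0..} g" and "0 < mG" "mG \<le> MG"
    and g'_range: "\<forall>r\<in>{0..P0M}. mG \<le> g' r \<and> g' r \<le> MG" by blast+
  then have "0 < calM" "calM \<le> mG" by (auto simp: calM_def)
  have "\<forall>r\<in>{0..P0M}. calM \<le> g' r"
  proof
    fix r assume "r \<in> {0..P0M}"
    with g'_range have "mG \<le> g' r" by blast
    with \<open>calM \<le> mG\<close> show "calM \<le> g' r" by linarith
  qed
  then have G_mono: "\<forall>u v. norm u \<le> P0M \<longrightarrow> norm v \<le> P0M \<longrightarrow>
      calM * (norm (u - v))\<^sup>2 \<le> inner (u - v) (velG g u - velG g v)"
    using velG_strongly_monotone[OF g_deriv g0] by blast
  have G_bdd: "\<forall>u. norm u \<le> P0M \<longrightarrow> norm (velG g u) \<le> MG * P0M"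
    using norm_velG_le[OF g_deriv g0 less_imp_le[OF \<open>0 < mG\<close>] g'_range] by blast
  have \<psi>_nonneg: "\<forall>r\<ge>0. 0 \<le> \<psi> r" using nonneg_if_pos_right_continuous[OF psi_pos psi_0] by blast
  obtain L where \<psi>_lip: "\<forall>r\<ge>0. \<forall>s\<ge>0. \<bar>\<psi> r - \<psi> s\<bar> \<le> L * \<bar>r - s\<bar>"
    using psi_lip lipschitz_if_right_continuous[OF _ psi_0] by metis
  have p_deriv: "\<forall>i\<in>{1..N}. \<forall>t>0. (p i has_vector_derivative
      (\<kappa> / real N) *\<^sub>R alignment \<psi> (velG g) {1..N} (\<lambda>k. q k t) (\<lambda>k. p k t) i) (at t)"
    using p_ode by (simp add: alignment_def)
  have p_bdd: "\<forall>t\<ge>0. \<forall>i\<in>{1..N}. norm (p i t) \<le> P0M"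
    using kappa \<psi>_nonneg by (intro alignment_velocity_bounded[OF _ g0 g_mono _ _ p_cont p_deriv P0M_ge]) auto
  note estimates = group_velocity_estimates[OF l less_imp_le[OF kappa] less_imp_le[OF \<open>0 < calM\<close>] _ G_mono G_bdd
      \<psi>_nonneg antimono_if_right_continuous[OF psi_mono psi_0] \<psi>_lip]
  show ?thesis
    using \<open>0 < mG\<close> \<open>mG \<le> MG\<close> p_bdd p_deriv by (intro allI impI estimates) auto
qed

end
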